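(* Let $(X,\mathcal A,m)$ be a probability space and $\mathcal B$ a Banach space continuously embedded in $L^1(X,m)$ and containing the constants. Let $L_\epsilon$, $\epsilon\in V$ ($V$ a neighbourhood of $0$), be Markov operators on $\mathcal B$ such that for each $\epsilon$, $1$ is a simple eigenvalue of $L_\epsilon$ with eigenfunction $h_\epsilon$ normalized by $\int h_\epsilon\,dm=1$. Suppose: (1) $\epsilon\mapsto L_\epsilon h_0\in\mathcal B$ is differentiable at $\epsilon=0$; (2) $\epsilon\mapsto L_\epsilon\phi\in\mathcal B$ is continuous at $\epsilon=0$ for every $\phi\in\mathcal B$; (3) there exist $\theta\in(0,1)$ and $C>0$, independent of $\epsilon$, such that $\|L_\epsilon^n\phi\|_{\mathcal B}\le C\theta^n\|\phi\|_{\mathcal B}$ for all $\phi\in\mathcal B_0$ and $n\ge1$. Then $h_\epsilon$ is differentiable at $\epsilon=0$ as an element of $\mathcal B$, and $\partial_\epsilon h_\epsilon|_{\epsilon=0}=(I-L_0)^{-1}\partial_\epsilon L_\epsilon h_0|_{\epsilon=0}$.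
   Context: $\mathcal B_0=\{\phi\in\mathcal B:\int\phi\,dm=0\}$; $(I-L_0)^{-1}$ is the inverse of $I-L_0$ on $\mathcal B_0$. A Markov operator is a positive linear operator preserving the integral with respect to $m$. *)

theory Defs
  imports "HOL-Probability.Probability"
begin

definition embedded_L1 :: "'a measure \<Rightarrow> ('b::banach \<Rightarrow> 'a \<Rightarrow> real) \<Rightarrow> bool" where
  "embedded_L1 M emb \<longleftrightarrow>
     (\<forall>\<phi>. integrable M (emb \<phi>)) \<and>
     (\<forall>\<phi> \<psi> x. emb (\<phi> + \<psi>) x = emb \<phi> x + emb \<psi> x) \<and>
     (\<forall>c \<phi> x. emb (c *\<^sub>R \<phi>) x = c * emb \<phi> x) \<and>
     (\<forall>\<phi>. (AE x in M. emb \<phi> x = 0) \<longrightarrow> \<phi> = 0) \<and>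
     (\<exists>K. \<forall>\<phi>. (\<integral>x. \<bar>emb \<phi> x\<bar> \<partial>M) \<le> K * norm \<phi>) \<and>
     (\<exists>e. AE x in M. emb e x = 1)"

definition Bint :: "'a measure \<Rightarrow> ('b \<Rightarrow> 'a \<Rightarrow> real) \<Rightarrow> 'b \<Rightarrow> real" where
  "Bint M emb \<phi> = (\<integral>x. emb \<phi> x \<partial>M)"

definition B0 :: "'a measure \<Rightarrow> ('b \<Rightarrow> 'a \<Rightarrow> real) \<Rightarrow> 'b set" where
  "B0 M emb = {\<phi>. Bint M emb \<phi> = 0}"

definition markov_op :: "'a measure \<Rightarrow> ('b::banach \<Rightarrow> 'a \<Rightarrow> real) \<Rightarrow> ('b \<Rightarrow> 'b) \<Rightarrow> bool" where
  "markov_op M emb T \<longleftrightarrow> bounded_linear T \<and>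
     (\<forall>\<phi>. (AE x in M. emb \<phi> x \<ge> 0) \<longrightarrow> (AE x in M. emb (T \<phi>) x \<ge> 0)) \<and>
     (\<forall>\<phi>. Bint M emb (T \<phi>) = Bint M emb \<phi>)"

end

theory Submission imports Defs begin

text \<open>Write \<open>u = (I - L\<^sub>0)\<^sup>-\<^sup>1 D\<close>, given on \<open>\<B>\<^sub>0\<close> by the Neumann series \<open>\<Sum>n. L\<^sub>0\<^sup>n D\<close>.
  The uniform decay of \<open>L\<^sub>\<epsilon>\<^sup>n\<close> on \<open>\<B>\<^sub>0\<close> gives a bound
  \<open>\<parallel>\<phi>\<parallel> \<le> K \<parallel>\<phi> - L\<^sub>\<epsilon> \<phi>\<parallel>\<close> on \<open>\<B>\<^sub>0\<close> with \<open>K\<close> independent of \<open>\<epsilon>\<close>. The remainder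
  \<open>w = h\<^sub>\<epsilon> - h\<^sub>0 - \<epsilon> u\<close> has mean zero and, because \<open>h\<^sub>\<epsilon>, h\<^sub>0\<close> are fixed points,
  \<open>w - L\<^sub>\<epsilon> w = (L\<^sub>\<epsilon> h\<^sub>0 - L\<^sub>0 h\<^sub>0 - \<epsilon> D) + \<epsilon> (L\<^sub>\<epsilon> u - L\<^sub>0 u)\<close>;
  both terms are \<open>o(\<epsilon>)\<close>, by differentiability of \<open>L\<^sub>\<epsilon> h\<^sub>0\<close> and continuity of \<open>L\<^sub>\<epsilon> u\<close>.\<close>

lemma bounded_linear_Bint:
  assumes "embedded_L1 M emb"
  shows "bounded_linear (Bint M emb)"
proof -
  from assms have integrable: "\<And>\<phi>. integrable M (emb \<phi>)"
    and add: "\<And>\<phi> \<psi>. emb (\<phi> + \<psi>) = (\<lambda>x. emb \<phi> x + emb \<psi> x)"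
    and scale: "\<And>c \<phi>. emb (c *\<^sub>R \<phi>) = (\<lambda>x. c * emb \<phi> x)"
    unfolding embedded_L1_def by auto
  from assms obtain K where K: "\<And>\<phi>. (\<integral>x. \<bar>emb \<phi> x\<bar> \<partial>M) \<le> K * norm \<phi>"
    unfolding embedded_L1_def by auto
  show ?thesis
  proof (rule bounded_linear_intro[where K=K])
    fix x y show "Bint M emb (x + y) = Bint M emb x + Bint M emb y"
      unfolding Bint_def add using integrable by (simp add: Bochner_Integration.integral_add)
  next
    fix r x show "Bint M emb (r *\<^sub>R x) = r *\<^sub>R Bint M emb x"
      unfolding Bint_def scale by simp
  next
    fix x
    have "norm (Bint M emb x) \<le> (\<integral>y. \<bar>emb x y\<bar> \<partial>M)"
      unfolding Bint_def real_norm_def by (rule integral_abs_bound)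
    also have "\<dots> \<le> norm x * K" using K[of x] by (simp add: mult.commute)
    finally show "norm (Bint M emb x) \<le> norm x * K" .
  qed
qed

lemma subspace_B0:
  assumes "embedded_L1 M emb"
  shows "subspace (B0 M emb)"
  unfolding B0_def
  using linear_subspace_kernel[OF bounded_linear.linear[OF bounded_linear_Bint[OF assms]]] .

lemma markov_op_B0_closed:
  "markov_op M emb T \<Longrightarrow> \<phi> \<in> B0 M emb \<Longrightarrow> T \<phi> \<in> B0 M emb"
  by (simp add: markov_op_def B0_def)

lemma Bint_funpow_markov_op:
  assumes "markov_op M emb T" shows "Bint M emb ((T ^^ n) \<phi>) = Bint M emb \<phi>"
  using assms by (induction n) (auto simp: markov_op_def)

lemma bounded_linear_funpow:
  fixes T :: "'a::real_normed_vector \<Rightarrow> 'a"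
  assumes "bounded_linear T" shows "bounded_linear (T ^^ n)"
proof (induction n)
  case 0 show ?case by (simp add: id_def bounded_linear_ident)
next
  case (Suc n) then show ?case
    using bounded_linear_compose[OF assms] by (simp add: o_def)
qed

lemma diff_funpow_telescope:
  fixes T :: "'a::real_normed_vector \<Rightarrow> 'a"
  assumes "bounded_linear T"
  shows "\<phi> - (T ^^ N) \<phi> = (\<Sum>n<N. (T ^^ n) (\<phi> - T \<phi>))"
proof (induction N)
  case 0 then show ?case by simp
next
  case (Suc N)
  interpret TN: bounded_linear "T ^^ N" using bounded_linear_funpow[OF assms] .
  have "\<phi> - (T ^^ Suc N) \<phi> = (\<phi> - (T ^^ N) \<phi>) + (T ^^ N) (\<phi> - T \<phi>)"
    by (simp add: funpow_swap1 TN.diff)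
  then show ?case using Suc by simp
qed

lemma exists_geometric_le_half:
  fixes \<theta> C :: real
  assumes "0 < \<theta>" "\<theta> < 1" "0 < C"
  obtains N where "N \<ge> 1" "C * \<theta> ^ N \<le> 1/2"
proof -
  obtain N where N: "\<theta> ^ N < 1 / (2 * C)"
    using real_arch_pow_inv[of "1/(2*C)" \<theta>] assms by auto
  have "\<theta> ^ N * (2 * C) < 1" using N assms by (simp add: less_divide_eq)
  moreover have "\<theta> ^ Suc N \<le> \<theta> ^ N" using assms by (intro power_decreasing) auto
  ultimately have "\<theta> ^ Suc N * (2 * C) < 1"
    using mult_right_mono[of "\<theta> ^ Suc N" "\<theta> ^ N" "2 * C"] assms by linarith
  then show ?thesis by (intro that[of "Suc N"]) (auto simp: algebra_simps)
qed

text \<open>Telescoping, \<open>\<phi> = (\<Sum>n<N. T\<^sup>n (\<phi> - T \<phi>)) + T\<^sup>N \<phi>\<close>, where the last term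
  has at most half the norm of \<open>\<phi>\<close>.\<close>

lemma norm_le_norm_diff_if_power_decay:
  fixes T :: "'a::real_normed_vector \<Rightarrow> 'a"
  assumes "bounded_linear T" "subspace S" "\<And>\<phi>. \<phi> \<in> S \<Longrightarrow> T \<phi> \<in> S"
    and decay: "\<And>\<phi> n. \<phi> \<in> S \<Longrightarrow> n \<ge> 1 \<Longrightarrow> norm ((T ^^ n) \<phi>) \<le> C * \<theta> ^ n * norm \<phi>"
    and "0 < \<theta>" "\<theta> < 1" "0 < C"
    and N: "N \<ge> 1" "C * \<theta> ^ N \<le> 1/2"
    and "\<phi> \<in> S"
  shows "norm \<phi> \<le> 2 * N * (1 + C) * norm (\<phi> - T \<phi>)"
proof -
  define \<psi> where "\<psi> = \<phi> - T \<phi>"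
  have "\<psi> \<in> S" unfolding \<psi>_def using assms by (simp add: subspace_diff)
  have bounded_powers: "norm ((T ^^ n) \<psi>) \<le> (1 + C) * norm \<psi>" for n
  proof (cases "n = 0")
    case True then show ?thesis using \<open>0 < C\<close> by (simp add: distrib_right)
  next
    case False
    then have "norm ((T ^^ n) \<psi>) \<le> C * \<theta> ^ n * norm \<psi>" using decay[OF \<open>\<psi> \<in> S\<close>] by simp
    also have "\<dots> \<le> C * 1 * norm \<psi>"
      using assms by (intro mult_right_mono mult_left_mono power_le_one) auto
    also have "\<dots> \<le> (1 + C) * norm \<psi>" by (simp add: distrib_right)
    finally show ?thesis .
  qed
  have "norm \<phi> \<le> norm (\<phi> - (T ^^ N) \<phi>) + norm ((T ^^ N) \<phi>)"
    using norm_triangle_ineq[of "\<phi> - (T ^^ N) \<phi>" "(T ^^ N) \<phi>"] by simp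
  also have "norm (\<phi> - (T ^^ N) \<phi>) = norm (\<Sum>n<N. (T ^^ n) \<psi>)"
    using diff_funpow_telescope[OF \<open>bounded_linear T\<close>] \<psi>_def by simp
  also have "\<dots> \<le> (\<Sum>n<N. norm ((T ^^ n) \<psi>))" by (rule norm_sum)
  also have "\<dots> \<le> real N * ((1 + C) * norm \<psi>)"
    using sum_bounded_above[of "{..<N}" "\<lambda>n. norm ((T ^^ n) \<psi>)"] bounded_powers by simp
  also have "norm ((T ^^ N) \<phi>) \<le> 1/2 * norm \<phi>"
    using decay[OF \<open>\<phi> \<in> S\<close> N(1)] N(2) mult_right_mono[OF N(2) norm_ge_zero[of \<phi>]] by linarith
  finally show ?thesis unfolding \<psi>_def by simp
qed

lemma uniformly_coercive_if_power_decay: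
  fixes T :: "'i \<Rightarrow> 'a::real_normed_vector \<Rightarrow> 'a"
  assumes "subspace S" "\<And>i. i \<in> I \<Longrightarrow> bounded_linear (T i)"
    and "\<And>i \<phi>. i \<in> I \<Longrightarrow> \<phi> \<in> S \<Longrightarrow> T i \<phi> \<in> S"
    and "\<And>i \<phi> n. i \<in> I \<Longrightarrow> \<phi> \<in> S \<Longrightarrow> n \<ge> 1 \<Longrightarrow> norm ((T i ^^ n) \<phi>) \<le> C * \<theta> ^ n * norm \<phi>"
    and "0 < \<theta>" "\<theta> < 1" "0 < C"
  shows "\<exists>K \<ge> 0. \<forall>i \<in> I. \<forall>\<phi> \<in> S. norm \<phi> \<le> K * norm (\<phi> - T i \<phi>)"
proof -
  obtain N where N: "N \<ge> 1" "C * \<theta> ^ N \<le> 1/2"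
    using exists_geometric_le_half[OF assms(5-7)] by blast
  have "norm \<phi> \<le> 2 * real N * (1 + C) * norm (\<phi> - T i \<phi>)" if "i \<in> I" "\<phi> \<in> S" for i \<phi>
    using norm_le_norm_diff_if_power_decay[OF assms(2)[OF \<open>i \<in> I\<close>] \<open>subspace S\<close>
        assms(3)[OF \<open>i \<in> I\<close>] assms(4)[OF \<open>i \<in> I\<close>] assms(5-7) N \<open>\<phi> \<in> S\<close>] .
  moreover have "0 \<le> 2 * real N * (1 + C)" using \<open>0 < C\<close> by simp
  ultimately show ?thesis by blast
qed

lemma inj_on_diff_if_coercive:
  assumes "linear T" "subspace S" "\<And>\<phi>. \<phi> \<in> S \<Longrightarrow> norm \<phi> \<le> K * norm (\<phi> - T \<phi>)"
  shows "inj_on (\<lambda>\<phi>. \<phi> - T \<phi>) S"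
proof (rule inj_onI)
  fix x y assume "x \<in> S" "y \<in> S" and eq: "x - T x = y - T y"
  then have "x - y \<in> S" using \<open>subspace S\<close> by (simp add: subspace_diff)
  moreover have "(x - y) - T (x - y) = 0"
    using eq by (simp add: linear_diff[OF \<open>linear T\<close>] algebra_simps)
  ultimately show "x = y" using assms(3)[of "x - y"] by simp
qed

lemma neumann_series_solves:
  fixes T :: "'a::real_normed_vector \<Rightarrow> 'a"
  assumes "bounded_linear T" "summable (\<lambda>n. (T ^^ n) x)"
  shows "(\<Sum>n. (T ^^ n) x) - T (\<Sum>n. (T ^^ n) x) = x"
proof -
  interpret T: bounded_linear T by fact
  have "T (\<Sum>n. (T ^^ n) x) = (\<Sum>n. (T ^^ Suc n) x)"
    using T.suminf[OF assms(2)] by simp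
  then show ?thesis using suminf_split_head[OF assms(2)] by simp
qed

lemma summable_funpow_if_geometric_decay:
  fixes T :: "'a::banach \<Rightarrow> 'a" and \<theta> C :: real
  assumes "\<And>n. n \<ge> 1 \<Longrightarrow> norm ((T ^^ n) x) \<le> C * \<theta> ^ n * norm x" "0 < \<theta>" "\<theta> < 1"
  shows "summable (\<lambda>n. (T ^^ n) x)"
proof (rule summable_comparison_test'[where N=1])
  show "summable (\<lambda>n. C * norm x * \<theta> ^ n)"
    using assms(2,3) by (intro summable_mult summable_geometric) auto
qed (use assms(1) in \<open>simp add: mult_ac\<close>)

lemma suminf_funpow_B0:
  assumes "embedded_L1 M emb" "markov_op M emb T" "D \<in> B0 M emb"
    and "summable (\<lambda>n. (T ^^ n) D)"
  shows "(\<Sum>n. (T ^^ n) D) \<in> B0 M emb"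
proof -
  interpret Bint: bounded_linear "Bint M emb" using bounded_linear_Bint[OF assms(1)] .
  have "Bint M emb (\<Sum>n. (T ^^ n) D) = (\<Sum>n. Bint M emb ((T ^^ n) D))"
    by (rule Bint.suminf[OF assms(4)])
  then show ?thesis using assms(3) Bint_funpow_markov_op[OF assms(2)] by (simp add: B0_def)
qed

lemma derivative_in_kernel_if_const:
  fixes f :: "real \<Rightarrow> 'a::real_normed_vector"
  assumes "bounded_linear F" "(f has_vector_derivative D) (at x)"
    and "open V" "x \<in> V" "\<And>y. y \<in> V \<Longrightarrow> F (f y) = c"
  shows "F D = 0"
proof -
  have "((\<lambda>y. F (f y)) has_vector_derivative F D) (at x)"
    by (rule bounded_linear.has_vector_derivative[OF assms(1,2)])
  then have "((\<lambda>y. c) has_vector_derivative F D) (at x)"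
    by (rule has_vector_derivative_transform_within_open) (use assms(3-5) in auto)
  then show ?thesis
    using vector_derivative_unique_at[OF _ has_vector_derivative_const] by blast
qed

lemma fixed_point_has_vector_derivative:
  fixes L :: "real \<Rightarrow> 'a::real_normed_vector \<Rightarrow> 'a" and h :: "real \<Rightarrow> 'a"
  assumes "open V" "0 \<in> V" "subspace S"
    and bl: "\<And>\<epsilon>. \<epsilon> \<in> V \<Longrightarrow> bounded_linear (L \<epsilon>)"
    and fixed: "\<And>\<epsilon>. \<epsilon> \<in> V \<Longrightarrow> L \<epsilon> (h \<epsilon>) = h \<epsilon>"
    and h_S: "\<And>\<epsilon>. \<epsilon> \<in> V \<Longrightarrow> h \<epsilon> - h 0 \<in> S"
    and coercive: "\<And>\<epsilon> \<phi>. \<epsilon> \<in> V \<Longrightarrow> \<phi> \<in> S \<Longrightarrow> norm \<phi> \<le> K * norm (\<phi> - L \<epsilon> \<phi>)"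
    and "0 \<le> K"
    and D: "((\<lambda>\<epsilon>. L \<epsilon> (h 0)) has_vector_derivative D) (at 0)"
    and cont: "continuous (at 0) (\<lambda>\<epsilon>. L \<epsilon> u)"
    and "u \<in> S" "u - L 0 u = D"
  shows "(h has_vector_derivative u) (at 0)"
proof -
  define r where "r \<epsilon> = norm (L \<epsilon> (h 0) - L 0 (h 0) - \<epsilon> *\<^sub>R D) / norm \<epsilon>" for \<epsilon>
  define g where "g \<epsilon> = K * (r \<epsilon> + norm (L \<epsilon> u - L 0 u))" for \<epsilon>
  have "(r \<longlongrightarrow> 0) (at 0)"
    using D unfolding r_def has_vector_derivative_def has_derivative_iff_norm by simp
  moreover have "((\<lambda>\<epsilon>. norm (L \<epsilon> u - L 0 u)) \<longlongrightarrow> 0) (at 0)"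
    using cont unfolding continuous_at by (intro tendsto_norm_zero LIM_zero)
  ultimately have "(g \<longlongrightarrow> 0) (at 0)"
    unfolding g_def by (intro tendsto_mult_right_zero tendsto_add_zero)
  moreover have "\<forall>\<^sub>F \<epsilon> in at 0. norm (norm (h \<epsilon> - h 0 - \<epsilon> *\<^sub>R u) / norm \<epsilon>) \<le> g \<epsilon>"
    using eventually_at_in_open[OF \<open>open V\<close> \<open>0 \<in> V\<close>]
  proof eventually_elim
    case (elim \<epsilon>)
    then have "\<epsilon> \<in> V" "\<epsilon> \<noteq> 0" by auto
    interpret L\<epsilon>: bounded_linear "L \<epsilon>" using bl[OF \<open>\<epsilon> \<in> V\<close>] .
    define w where "w = h \<epsilon> - h 0 - \<epsilon> *\<^sub>R u"
    have "w \<in> S"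
      unfolding w_def using \<open>subspace S\<close> \<open>u \<in> S\<close> h_S[OF \<open>\<epsilon> \<in> V\<close>]
      by (simp add: subspace_diff subspace_scale)
    have "w - L \<epsilon> w = (L \<epsilon> (h 0) - L 0 (h 0) - \<epsilon> *\<^sub>R D) + \<epsilon> *\<^sub>R (L \<epsilon> u - L 0 u)"
      unfolding w_def \<open>u - L 0 u = D\<close>[symmetric]
      using fixed[OF \<open>\<epsilon> \<in> V\<close>] fixed[OF \<open>0 \<in> V\<close>]
      by (simp add: L\<epsilon>.diff L\<epsilon>.add L\<epsilon>.scaleR algebra_simps)
    then have "norm (w - L \<epsilon> w)
        \<le> norm (L \<epsilon> (h 0) - L 0 (h 0) - \<epsilon> *\<^sub>R D) + norm \<epsilon> * norm (L \<epsilon> u - L 0 u)"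
      using norm_triangle_ineq[of "L \<epsilon> (h 0) - L 0 (h 0) - \<epsilon> *\<^sub>R D" "\<epsilon> *\<^sub>R (L \<epsilon> u - L 0 u)"]
      by simp
    also have "norm (L \<epsilon> (h 0) - L 0 (h 0) - \<epsilon> *\<^sub>R D) = r \<epsilon> * norm \<epsilon>"
      using \<open>\<epsilon> \<noteq> 0\<close> by (simp add: r_def)
    finally have "norm (w - L \<epsilon> w) \<le> r \<epsilon> * norm \<epsilon> + norm \<epsilon> * norm (L \<epsilon> u - L 0 u)" .
    then have "K * norm (w - L \<epsilon> w) \<le> K * (r \<epsilon> * norm \<epsilon> + norm \<epsilon> * norm (L \<epsilon> u - L 0 u))"
      using \<open>0 \<le> K\<close> by (rule mult_left_mono)
    also have "\<dots> = g \<epsilon> * norm \<epsilon>" by (simp add: g_def algebra_simps)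
    finally have "K * norm (w - L \<epsilon> w) \<le> g \<epsilon> * norm \<epsilon>" .
    then have "norm w \<le> g \<epsilon> * norm \<epsilon>"
      using coercive[OF \<open>\<epsilon> \<in> V\<close> \<open>w \<in> S\<close>] by linarith
    then show ?case using \<open>\<epsilon> \<noteq> 0\<close> by (simp add: w_def divide_le_eq)
  qed
  ultimately have "((\<lambda>\<epsilon>. norm (h \<epsilon> - h 0 - \<epsilon> *\<^sub>R u) / norm \<epsilon>) \<longlongrightarrow> 0) (at 0)"
    by (rule Lim_null_comparison[rotated])
  then show ?thesis
    unfolding has_vector_derivative_def has_derivative_iff_norm
    by (simp add: bounded_linear_scaleR_left)
qed

theorem proposition6p2:
  fixes M :: "'a measure" and emb :: "'b::banach \<Rightarrow> 'a \<Rightarrow> real"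
    and L :: "real \<Rightarrow> 'b \<Rightarrow> 'b" and h :: "real \<Rightarrow> 'b" and V :: "real set"
    and D :: 'b and \<theta> C :: real
  assumes "prob_space M"
    and "embedded_L1 M emb"
    and "open V" and "0 \<in> V"
    and "\<And>\<epsilon>. \<epsilon> \<in> V \<Longrightarrow> markov_op M emb (L \<epsilon>)"
    and "\<And>\<epsilon>. \<epsilon> \<in> V \<Longrightarrow> {\<phi>. L \<epsilon> \<phi> = \<phi>} = span {h \<epsilon>}"
    and "\<And>\<epsilon>. \<epsilon> \<in> V \<Longrightarrow> Bint M emb (h \<epsilon>) = 1"
    and "((\<lambda>\<epsilon>. L \<epsilon> (h 0)) has_vector_derivative D) (at 0)"
    and "\<And>\<phi>. continuous (at 0) (\<lambda>\<epsilon>. L \<epsilon> \<phi>)"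
    and "0 < \<theta>" and "\<theta> < 1" and "0 < C"
    and "\<And>\<epsilon> \<phi> n. \<epsilon> \<in> V \<Longrightarrow> \<phi> \<in> B0 M emb \<Longrightarrow> n \<ge> 1 \<Longrightarrow>
           norm ((L \<epsilon> ^^ n) \<phi>) \<le> C * \<theta> ^ n * norm \<phi>"
  shows "(h has_vector_derivative
            (the_inv_into (B0 M emb) (\<lambda>\<phi>. \<phi> - L 0 \<phi>) D)) (at 0)"
proof -
  interpret Bint: bounded_linear "Bint M emb" using bounded_linear_Bint[OF assms(2)] .
  have B0: "subspace (B0 M emb)" using subspace_B0[OF assms(2)] .
  note markov = assms(5)
  then have bl: "\<And>\<epsilon>. \<epsilon> \<in> V \<Longrightarrow> bounded_linear (L \<epsilon>)" by (simp add: markov_op_def)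
  have fixed: "L \<epsilon> (h \<epsilon>) = h \<epsilon>" if "\<epsilon> \<in> V" for \<epsilon>
    using assms(6)[OF that] span_base[of "h \<epsilon>" "{h \<epsilon>}"] by auto
  have h_B0: "h \<epsilon> - h 0 \<in> B0 M emb" if "\<epsilon> \<in> V" for \<epsilon>
    using assms(7)[OF that] assms(7)[OF assms(4)] by (simp add: B0_def Bint.diff)
  have L_B0: "L \<epsilon> \<phi> \<in> B0 M emb" if "\<epsilon> \<in> V" "\<phi> \<in> B0 M emb" for \<epsilon> \<phi>
    using markov_op_B0_closed[OF markov[OF that(1)] that(2)] .
  obtain K where "0 \<le> K" and "\<forall>\<epsilon> \<in> V. \<forall>\<phi> \<in> B0 M emb. norm \<phi> \<le> K * norm (\<phi> - L \<epsilon> \<phi>)"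
    using uniformly_coercive_if_power_decay[where I=V and T=L, OF B0 bl L_B0 assms(13) assms(10-12)] by blast
  then have coercive: "\<And>\<epsilon> \<phi>. \<epsilon> \<in> V \<Longrightarrow> \<phi> \<in> B0 M emb \<Longrightarrow> norm \<phi> \<le> K * norm (\<phi> - L \<epsilon> \<phi>)"
    by blast
  have "Bint M emb (L \<epsilon> (h 0)) = 1" if "\<epsilon> \<in> V" for \<epsilon>
    using markov[OF that] assms(7)[OF assms(4)] by (simp add: markov_op_def)
  then have "D \<in> B0 M emb"
    using derivative_in_kernel_if_const[OF Bint.bounded_linear_axioms assms(8,3,4)] by (simp add: B0_def)
  define u where "u = (\<Sum>n. (L 0 ^^ n) D)"
  have "summable (\<lambda>n. (L 0 ^^ n) D)"
    by (rule summable_funpow_if_geometric_decay[OF assms(13)[OF assms(4) \<open>D \<in> B0 M emb\<close>] assms(10,11)])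
  then have u: "u - L 0 u = D" "u \<in> B0 M emb"
    unfolding u_def using neumann_series_solves[OF bl[OF assms(4)]]
      suminf_funpow_B0[OF assms(2) markov[OF assms(4)] \<open>D \<in> B0 M emb\<close>] by auto
  have "inj_on (\<lambda>\<phi>. \<phi> - L 0 \<phi>) (B0 M emb)"
    using inj_on_diff_if_coercive[OF bounded_linear.linear[OF bl[OF assms(4)]] B0] coercive[OF assms(4)] .
  then have "the_inv_into (B0 M emb) (\<lambda>\<phi>. \<phi> - L 0 \<phi>) D = u"
    using u by (intro the_inv_into_f_eq) auto
  moreover have "(h has_vector_derivative u) (at 0)"
    using fixed_point_has_vector_derivative[OF assms(3,4) B0 bl fixed h_B0 coercive \<open>0 \<le> K\<close>
        assms(8,9) u(2,1)] .
  ultimately show ?thesis by simp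
qed

end
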